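(* Let $q$ be a prime power, $m>1$ an integer, and $k\ge 1$ an integer. For $1\le i\le k$, let $\gamma_i\in \mathbf{F}_{q^m}$ and let $L_i(x)\in \mathbf{F}_q[x]$ and $B(x)\in\mathbf{F}_q[x]$ be linearized polynomials. Let $h_i(x)\in \mathbf{F}_{q^m}[x]$ be such that $h_i(B(\mathbf{F}_{q^m}))\subseteq \mathbf{F}_q$ for each $i$. Then $$F(x):=\sum_{i=1}^k\bigl(L_i(x)+\gamma_i\bigr)h_i(B(x))$$ is a permutation polynomial of $\mathbf{F}_{q^m}$ if and only if both of the following hold: (1) the polynomial $\sum_{i=1}^k\bigl(L_i(x)+B(\gamma_i)\bigr)h_i(x)$ permutes the set $B(\mathbf{F}_{q^m})$; (2) for every $y\in B(\mathbf{F}_{q^m})$, an element $x\in\mathbf{F}_{q^m}$ satisfies both $\sum_{i=1}^k L_i(x)h_i(y)=0$ and $B(x)=0$ if and only if $x=0$.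
   Context: A linearized polynomial over a field $K\supseteq\mathbf{F}_q$ (here with coefficients in $\mathbf{F}_q$) is a polynomial of the form $\sum_{i=0}^{m-1}a_i x^{q^i}$. For a polynomial $g$ and $S\subseteq\mathbf{F}_{q^m}$, $g(S)=\{g(s):s\in S\}$. A polynomial $f\in\mathbf{F}_{q^m}[x]$ is a permutation polynomial of $\mathbf{F}_{q^m}$ if $x\mapsto f(x)$ is a bijection of $\mathbf{F}_{q^m}$; a polynomial permutes a set $S$ if it maps $S$ bijectively onto $S$. *)

theory Defs
  imports "HOL-Computational_Algebra.Computational_Algebra"
begin

text \<open>We model F_{q^m} as a finite field type 'a with CARD('a) = q^m; the
subfield F_q is the fixed field of the Frobenius x \<mapsto> x^q.\<close>

definition prime_power :: "nat \<Rightarrow> bool" where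
  "prime_power q \<longleftrightarrow> (\<exists>p n. prime p \<and> n > 0 \<and> q = p ^ n)"

definition subfield_Fq :: "nat \<Rightarrow> 'a::field set" where
  "subfield_Fq q = {x. x ^ q = x}"

definition linearized :: "nat \<Rightarrow> nat \<Rightarrow> 'a::field poly \<Rightarrow> bool" where
  "linearized q m L \<longleftrightarrow>
     (\<exists>a :: nat \<Rightarrow> 'a. (\<forall>i<m. a i \<in> subfield_Fq q) \<and>
        L = (\<Sum>i<m. monom (a i) (q ^ i)))"

definition permutation_polynomial :: "'a::field poly \<Rightarrow> bool" where
  "permutation_polynomial f \<longleftrightarrow> bij (poly f)"

definition permutes_set :: "'a::field poly \<Rightarrow> 'a set \<Rightarrow> bool" where
  "permutes_set g S \<longleftrightarrow> bij_betw (poly g) S S"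

end

theory Submission
  imports Defs "HOL-Number_Theory.Residues"
begin

text \<open>The map B is additive, so B(F_{q^m}) indexes the cosets of ker B, and on
these cosets F acts as follows: B \<circ> F = G \<circ> B (linearized polynomials over F_q commute and
the factors h_i(B(x)) are F_q-scalars), while translating x by z \<in> ker B changes F(x) by
the additive term \<Sum>_i L_i(z) h_i(B(x)).  Hence F is injective iff G is injective on
B(F_{q^m}) and each of these additive maps is injective on ker B.\<close>

lemma bij_iff_bij_betw_range_and_kernels:
  fixes f :: "'a::{finite,ab_group_add} \<Rightarrow> 'a"
    and b :: "'a \<Rightarrow> 'b::ab_group_add"
    and g :: "'b \<Rightarrow> 'b"
    and d :: "'b \<Rightarrow> 'a \<Rightarrow> 'a"
  assumes b_add: "\<And>x y. b (x + y) = b x + b y"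
    and b_f: "\<And>x. b (f x) = g (b x)"
    and f_shift: "\<And>x z. b z = 0 \<Longrightarrow> f (x + z) = f x + d (b x) z"
  shows "bij f \<longleftrightarrow>
           bij_betw g (range b) (range b) \<and>
           (\<forall>y\<in>range b. \<forall>x. (d y x = 0 \<and> b x = 0) \<longleftrightarrow> x = 0)"
proof -
  have b0: "b 0 = 0"
    using b_add[of 0 0] by simp
  have d0: "d y 0 = 0" if "y \<in> range b" for y
    using that f_shift[of 0] b0 by auto
  have g_range: "g ` range b \<subseteq> range b"
    by (auto simp flip: b_f)
  show ?thesis
  proof
    assume "bij f"
    have "range b \<subseteq> g ` range b"
    proof
      fix s assume "s \<in> range b"
      then obtain x where "s = b (f x)"
        using \<open>bij f\<close> by (metis bij_pointE rangeE)
      then show "s \<in> g ` range b"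
        by (simp add: b_f)
    qed
    then have "bij_betw g (range b) (range b)"
      using g_range finite_surj_inj[of "range b" g] by (simp add: bij_betw_def)
    moreover have "x = 0" if "y \<in> range b" "d y x = 0" "b x = 0" for x y
    proof -
      obtain x0 where "y = b x0"
        using \<open>y \<in> range b\<close> by blast
      then have "f (x0 + x) = f x0"
        using f_shift[OF \<open>b x = 0\<close>] \<open>d y x = 0\<close> by simp
      then show "x = 0"
        using \<open>bij f\<close> by (metis add_cancel_right_right bij_is_inj injD)
    qed
    ultimately show "bij_betw g (range b) (range b) \<and>
        (\<forall>y\<in>range b. \<forall>x. (d y x = 0 \<and> b x = 0) \<longleftrightarrow> x = 0)"
      using d0 b0 by blast
  next
    assume cond: "bij_betw g (range b) (range b) \<and>
        (\<forall>y\<in>range b. \<forall>x. (d y x = 0 \<and> b x = 0) \<longleftrightarrow> x = 0)"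
    have "inj f"
    proof (rule injI)
      fix x x' assume eq: "f x = f x'"
      then have "g (b x) = g (b x')"
        by (metis b_f)
      then have "b x = b x'"
        using cond by (auto simp: bij_betw_def inj_on_def)
      then have "b (x' - x) = 0"
        using b_add[of x "x' - x"] by simp
      moreover have "d (b x) (x' - x) = 0"
        using f_shift[OF \<open>b (x' - x) = 0\<close>, of x] eq by simp
      ultimately have "x' - x = 0"
        using cond by blast
      then show "x = x'"
        by simp
    qed
    then show "bij f"
      using finite_UNIV_inj_surj[of f] by (simp add: bij_def)
  qed
qed

lemma power_add_card_prime_power:
  fixes q m :: nat
  assumes "prime_power q" "card (UNIV :: 'a::{finite,field} set) = q ^ m" "m > 0"
  shows "(x + y :: 'a) ^ q = x ^ q + y ^ q"
proof -
  obtain p n where p: "prime p" "n > 0" "q = p ^ n"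
    using assms(1) unfolding prime_power_def by blast
  have char_prime: "prime CHAR('a)"
    using prime_CHAR_semidom finite_imp_CHAR_pos[where 'a='a] by auto
  have "CHAR('a) dvd p ^ (n * m)"
    using CHAR_dvd_CARD[where 'a='a] assms(2) p(3) by (simp add: power_mult)
  then have "CHAR('a) = p"
    using char_prime p(1) prime_dvd_power primes_dvd_imp_eq by blast
  then show ?thesis
    using freshmans_dream'[OF char_prime] p(3) by blast
qed

context
  fixes q :: nat
  assumes power_q_add: "\<And>x y :: 'a::field. (x + y) ^ q = x ^ q + y ^ q"
    and q_pos: "q > 0"
begin

lemma power_q_power_add: "((x::'a) + y) ^ (q ^ i) = x ^ (q ^ i) + y ^ (q ^ i)"
proof (induction i arbitrary: x y)
  case (Suc i)
  then show ?case
    by (simp add: power_mult power_q_add)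
qed simp

lemma power_q_power_sum: "(sum (f :: 'b \<Rightarrow> 'a) S) ^ (q ^ i) = (\<Sum>j\<in>S. f j ^ (q ^ i))"
  by (induction S rule: infinite_finite_induct) (auto simp: power_q_power_add q_pos)

lemma subfield_Fq_power_q_power: "(c::'a) \<in> subfield_Fq q \<Longrightarrow> c ^ (q ^ i) = c"
  unfolding subfield_Fq_def by (induction i) (auto simp: power_mult)

lemma linearized_add: "linearized q m L \<Longrightarrow> poly L ((x::'a) + y) = poly L x + poly L y"
  unfolding linearized_def
  by (auto simp: poly_sum poly_monom power_q_power_add distrib_left sum.distrib)

lemma linearized_zero: "linearized q m L \<Longrightarrow> poly L (0::'a) = 0"
  using linearized_add[of m L 0 0] by (metis add_cancel_right_right)

lemma linearized_sum:
  "linearized q m L \<Longrightarrow> poly L (sum (f::'b \<Rightarrow> 'a) S) = (\<Sum>j\<in>S. poly L (f j))"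
  by (induction S rule: infinite_finite_induct) (auto simp: linearized_zero linearized_add)

lemma linearized_smult:
  "linearized q m L \<Longrightarrow> c \<in> subfield_Fq q \<Longrightarrow> poly L ((c::'a) * x) = c * poly L x"
  unfolding linearized_def
  by (auto simp: poly_sum poly_monom power_mult_distrib subfield_Fq_power_q_power
      sum_distrib_left mult_ac)

lemma linearized_power_q_power:
  assumes "linearized q m B"
  shows "poly B ((x::'a) ^ (q ^ i)) = poly B x ^ (q ^ i)"
proof -
  obtain b where b: "\<forall>j<m. b j \<in> subfield_Fq q" "B = (\<Sum>j<m. Polynomial.monom (b j) (q ^ j))"
    using assms unfolding linearized_def by blast
  have "poly B x ^ (q ^ i) = (\<Sum>j<m. b j ^ (q ^ i) * (x ^ q ^ j) ^ (q ^ i))"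
    by (simp add: b(2) poly_sum poly_monom power_q_power_sum power_mult_distrib)
  also have "\<dots> = (\<Sum>j<m. b j * (x ^ q ^ i) ^ q ^ j)"
    using b(1) by (simp add: subfield_Fq_power_q_power mult.commute flip: power_mult)
  also have "\<dots> = poly B (x ^ (q ^ i))"
    by (simp add: b(2) poly_sum poly_monom)
  finally show ?thesis
    by simp
qed

lemma linearized_commute:
  assumes "linearized q m L" "linearized q m B"
  shows "poly B (poly L (x::'a)) = poly L (poly B x)"
proof -
  obtain a where a: "\<forall>j<m. a j \<in> subfield_Fq q" "L = (\<Sum>j<m. Polynomial.monom (a j) (q ^ j))"
    using assms(1) unfolding linearized_def by blast
  have "poly B (poly L x) = (\<Sum>j<m. poly B (a j * x ^ q ^ j))"
    unfolding a(2) poly_sum poly_monom by (rule linearized_sum[OF assms(2)])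
  also have "\<dots> = (\<Sum>j<m. a j * poly B x ^ q ^ j)"
    using a(1) by (simp add: linearized_smult[OF assms(2)] linearized_power_q_power[OF assms(2)])
  also have "\<dots> = poly L (poly B x)"
    by (simp add: a(2) poly_sum poly_monom)
  finally show ?thesis .
qed

lemma linearized_of_affine_combination:
  fixes L :: "'i \<Rightarrow> 'a poly" and B :: "'a poly"
  assumes "\<forall>i\<in>I. linearized q m (L i)" "linearized q m B" "\<forall>i\<in>I. c i \<in> subfield_Fq q"
  shows "poly B (\<Sum>i\<in>I. (poly (L i) x + \<gamma> i) * c i)
       = (\<Sum>i\<in>I. (poly (L i) (poly B x) + poly B (\<gamma> i)) * c i)"
  unfolding linearized_sum[OF assms(2)]
proof (rule sum.cong[OF refl])
  fix i assume "i \<in> I"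
  have "poly B ((poly (L i) x + \<gamma> i) * c i) = c i * poly B (poly (L i) x + \<gamma> i)"
    using linearized_smult[OF assms(2)] assms(3) \<open>i \<in> I\<close> by (simp add: mult.commute)
  also have "\<dots> = c i * (poly (L i) (poly B x) + poly B (\<gamma> i))"
    using assms(1,2) \<open>i \<in> I\<close> by (simp add: linearized_add linearized_commute)
  finally show "poly B ((poly (L i) x + \<gamma> i) * c i) = (poly (L i) (poly B x) + poly B (\<gamma> i)) * c i"
    by (simp add: mult.commute)
qed

lemma affine_combination_shift:
  fixes L :: "'i \<Rightarrow> 'a poly"
  assumes "\<forall>i\<in>I. linearized q m (L i)"
  shows "(\<Sum>i\<in>I. (poly (L i) (x + z) + \<gamma> i) * c i)
       = (\<Sum>i\<in>I. (poly (L i) x + \<gamma> i) * c i) + (\<Sum>i\<in>I. poly (L i) z * c i)"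
  unfolding sum.distrib[symmetric]
  using assms by (intro sum.cong) (auto simp: linearized_add algebra_simps)

end

theorem theorem2p1:
  fixes q m k :: nat
    and \<gamma> :: "nat \<Rightarrow> 'a::{finite,field}"
    and L h :: "nat \<Rightarrow> 'a poly"
    and B :: "'a poly"
  assumes "prime_power q"
    and "card (UNIV :: 'a set) = q ^ m"
    and "m > 1"
    and "k \<ge> 1"
    and "\<forall>i\<in>{1..k}. linearized q m (L i)"
    and "linearized q m B"
    and "\<forall>i\<in>{1..k}. poly (h i) ` (poly B ` UNIV) \<subseteq> subfield_Fq q"
  shows "permutation_polynomial
           (\<Sum>i\<in>{1..k}. (L i + [:\<gamma> i:]) * pcompose (h i) B)
         \<longleftrightarrow>
         (permutes_set (\<Sum>i\<in>{1..k}. (L i + [:poly B (\<gamma> i):]) * h i) (poly B ` UNIV)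
          \<and> (\<forall>y\<in>poly B ` UNIV. \<forall>x.
               ((\<Sum>i\<in>{1..k}. poly (L i) x * poly (h i) y) = 0 \<and> poly B x = 0)
               \<longleftrightarrow> x = 0))"
proof -
  have power_q_add: "\<And>x y :: 'a. (x + y) ^ q = x ^ q + y ^ q"
    using power_add_card_prime_power[OF assms(1,2)] assms(3) by simp
  have q_pos: "q > 0"
    using assms(1) unfolding prime_power_def by (auto simp: prime_gt_0_nat)
  have h_Fq: "\<forall>i\<in>{1..k}. poly (h i) (poly B x) \<in> subfield_Fq q" for x
    using assms(7) by blast
  show ?thesis
    unfolding permutation_polynomial_def permutes_set_def
  proof (rule bij_iff_bij_betw_range_and_kernels)
    show "poly B (x + y) = poly B x + poly B y" for x y
      using linearized_add[OF power_q_add q_pos assms(6)] .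
    show "poly B (poly (\<Sum>i\<in>{1..k}. (L i + [:\<gamma> i:]) * pcompose (h i) B) x)
        = poly (\<Sum>i\<in>{1..k}. (L i + [:poly B (\<gamma> i):]) * h i) (poly B x)" for x
      using linearized_of_affine_combination[OF power_q_add q_pos assms(5,6) h_Fq]
      by (simp add: poly_sum poly_pcompose)
    show "poly (\<Sum>i\<in>{1..k}. (L i + [:\<gamma> i:]) * pcompose (h i) B) (x + z)
        = poly (\<Sum>i\<in>{1..k}. (L i + [:\<gamma> i:]) * pcompose (h i) B) x
          + (\<Sum>i\<in>{1..k}. poly (L i) z * poly (h i) (poly B x))"
      if "poly B z = 0" for x z
      using that affine_combination_shift[OF power_q_add q_pos assms(5)]
        linearized_add[OF power_q_add q_pos assms(6), of x z]
      by (simp add: poly_sum poly_pcompose)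
  qed
qed

end
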